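(* Assume $\mathcal I=\emptyset$. If the maximal isotropic subspace $\mathcal M$ is strictly positive, then the smallest eigenvalue $\lambda\leq0$ of $-\Delta(\mathcal M)$ is simple.
   Context: Let $\mathcal G$ be a finite connected graph with no internal edges and a finite set $\mathcal E$ of external edges (half-lines $I_e=[0,\infty)$). $\mathcal H=\bigoplus_{e\in\mathcal E}L^2([0,\infty))$; $\mathcal D$ = $\psi\in\mathcal H$ with $\psi_e,\psi_e'$ absolutely continuous, $\psi_e''\in L^2$. $\mathcal K=\mathbb C^{|\mathcal E|}$, ${}^d\mathcal K=\mathcal K\oplus\mathcal K$. Maximal isotropic subspaces of ${}^d\mathcal K$ are $\mathcal M(A,B)=\{\chi_1\oplus\chi_2:A\chi_1+B\chi_2=0\}$ with $(A,B)$ of rank $|\mathcal E|$ and $AB^\dagger$ self-adjoint; $\Delta(\mathcal M)$ is the self-adjoint operator $(\Delta\psi)_e=\psi_e''$ on $\{\psi\in\mathcal D:A\underline\psi+B\underline\psi'=0\}$ where $\underline\psi=\{\psi_e(0)\}_e$, $\underline\psi'=\{\psi_e'(0)\}_e$. $\mathfrak S(\mathsf k;\mathcal M)=-(A+i\mathsf kB)^{-1}(A-i\mathsf kB)$. $\mathcal M$ is strictly positive if there is $\varkappa_0\geq0$ such that all entries of $\mathbb I+\mathfrak S(i\varkappa;\mathcal M)$ are positive for all $\varkappa\ge\varkappa_0$. *)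

theory Defs
  imports "HOL-Analysis.Analysis" "HOL-Library.Function_Algebras"
begin

text \<open>Star graph with no internal edges: edges indexed by a finite type 'e,
  each edge is the half-line [0,oo). A function on the graph is
  psi :: 'e \<Rightarrow> real \<Rightarrow> complex, with the convention psi e x = 0 for x < 0.\<close>

definition cmat_adj :: "complex^'n^'m \<Rightarrow> complex^'m^'n" where
  "cmat_adj M = (\<chi> i j. cnj (M $ j $ i))"

definition cmat_scale :: "complex \<Rightarrow> complex^'n^'m \<Rightarrow> complex^'n^'m" where
  "cmat_scale c M = (\<chi> i j. c * M $ i $ j)"

definition AB_block :: "complex^'e^'e \<Rightarrow> complex^'e^'e \<Rightarrow> complex^('e + 'e)^'e" where
  "AB_block A B = (\<chi> i j. case j of Inl a \<Rightarrow> A $ i $ a | Inr b \<Rightarrow> B $ i $ b)"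

definition max_isotropic_data :: "complex^'e^'e \<Rightarrow> complex^'e^'e \<Rightarrow> bool" where
  "max_isotropic_data A B \<longleftrightarrow>
     rank (AB_block A B) = CARD('e) \<and> cmat_adj (A ** cmat_adj B) = A ** cmat_adj B"

definition smatrix :: "complex^'e^'e \<Rightarrow> complex^'e^'e \<Rightarrow> complex \<Rightarrow> complex^'e^'e" where
  "smatrix A B k = - (matrix_inv (A + cmat_scale (\<i> * k) B) ** (A - cmat_scale (\<i> * k) B))"

definition strictly_positive :: "complex^'e^'e \<Rightarrow> complex^'e^'e \<Rightarrow> bool" where
  "strictly_positive A B \<longleftrightarrow>
     (\<exists>\<kappa>0::real. \<kappa>0 \<ge> 0 \<and> (\<forall>\<kappa>\<ge>\<kappa>0. \<forall>i j.
        (mat 1 + smatrix A B (\<i> * complex_of_real \<kappa>)) $ i $ j \<in> \<real> \<and>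
        Re ((mat 1 + smatrix A B (\<i> * complex_of_real \<kappa>)) $ i $ j) > 0))"

text \<open>f on [0,oo) (zero on the negative axis) lies in L^2, f and f' = f1 are (locally)
  absolutely continuous, i.e. indefinite integrals, and f'' = f2 lies in L^2.\<close>
definition H2_half :: "(real \<Rightarrow> complex) \<Rightarrow> (real \<Rightarrow> complex) \<Rightarrow> (real \<Rightarrow> complex) \<Rightarrow> bool" where
  "H2_half f f1 f2 \<longleftrightarrow>
     (\<forall>x<0. f x = 0) \<and>
     (\<forall>x\<ge>0. f2 absolutely_integrable_on {0..x}) \<and>
     (\<forall>x\<ge>0. f1 x = f1 0 + integral {0..x} f2) \<and>
     (\<forall>x\<ge>0. f x = f 0 + integral {0..x} f1) \<and>
     (\<lambda>x. (cmod (f x))\<^sup>2) integrable_on {0..} \<and>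
     (\<lambda>x. (cmod (f2 x))\<^sup>2) integrable_on {0..}"

definition eigenspace_negLap ::
  "complex^'e^'e \<Rightarrow> complex^'e^'e \<Rightarrow> real \<Rightarrow> ('e \<Rightarrow> real \<Rightarrow> complex) set" where
  "eigenspace_negLap A B lam = {\<psi>. \<exists>d1 d2.
     (\<forall>e. H2_half (\<psi> e) (d1 e) (d2 e)) \<and>
     A *v (\<chi> e. \<psi> e 0) + B *v (\<chi> e. d1 e 0) = 0 \<and>
     (\<forall>e. AE x in lebesgue. 0 \<le> x \<longrightarrow> - d2 e x = complex_of_real lam * \<psi> e x)}"

definition is_eigenvalue_negLap :: "complex^'e^'e \<Rightarrow> complex^'e^'e \<Rightarrow> real \<Rightarrow> bool" where
  "is_eigenvalue_negLap A B lam \<longleftrightarrow> (\<exists>\<psi>\<in>eigenspace_negLap A B lam. \<psi> \<noteq> (\<lambda>e x. 0))"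

definition gscale :: "complex \<Rightarrow> ('e \<Rightarrow> real \<Rightarrow> complex) \<Rightarrow> ('e \<Rightarrow> real \<Rightarrow> complex)" where
  "gscale c \<psi> = (\<lambda>e x. c * \<psi> e x)"

definition cdim :: "('e \<Rightarrow> real \<Rightarrow> complex) set \<Rightarrow> nat" where
  "cdim S = vector_space.dim gscale S"

end

theory Submission
  imports Defs
begin

(* On each half-line an eigenfunction for the eigenvalue -k^2 <= 0 solves f'' = k^2 f and is
   square integrable; this forces k > 0 and f(x) = f(0) exp(-k x).  So the eigenspace is the image
   of the kernel of A - k B under c |-> c exp(-k x), and minimality of the eigenvalue makes A - t B
   injective for every t > k.  For large kappa the matrix I + S(i kappa) = -2 kappa (A - kappa B)^-1 B
   is Hermitian (by isotropy) with positive entries, and A x = t B x exactly when x is its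
   eigenvector for the eigenvalue 2 kappa / (kappa - t).  Hence the kernel of A - k B is the
   eigenspace of the largest eigenvalue of a symmetric matrix with positive entries, which is
   one-dimensional by the Perron-Frobenius argument: |w| is a top eigenvector whenever w is, so top
   eigenvectors have no zero entries. *)

lemma cmat_adj_cmat_adj [simp]: "cmat_adj (cmat_adj X) = X"
  by (simp add: cmat_adj_def vec_eq_iff)

lemma cmat_adj_mult: "cmat_adj (X ** Y) = cmat_adj Y ** cmat_adj X"
  by (simp add: cmat_adj_def vec_eq_iff matrix_matrix_mult_def mult.commute)

lemma cmat_adj_diff: "cmat_adj (X - Y) = cmat_adj X - cmat_adj Y"
  by (simp add: cmat_adj_def vec_eq_iff)

lemma cmat_adj_mat_1: "cmat_adj (mat 1) = mat 1"
  by (simp add: cmat_adj_def vec_eq_iff mat_def)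

lemma cmat_adj_scale_of_real:
  "cmat_adj (cmat_scale (of_real r) X) = cmat_scale (of_real r) (cmat_adj X)"
  by (simp add: cmat_adj_def cmat_scale_def vec_eq_iff)

lemma cmat_scale_mult_left: "cmat_scale c X ** Y = cmat_scale c (X ** Y)"
  by (simp add: cmat_scale_def vec_eq_iff matrix_matrix_mult_def sum_distrib_left mult.assoc)

lemma cmat_scale_mult_right: "X ** cmat_scale c Y = cmat_scale c (X ** Y)"
  by (simp add: cmat_scale_def vec_eq_iff matrix_matrix_mult_def sum_distrib_left mult.left_commute)

lemma cmat_scale_matrix_vector_mult: "cmat_scale c X *v x = c *s (X *v x)"
  by (simp add: cmat_scale_def vec_eq_iff matrix_vector_mult_def sum_distrib_left mult.assoc)

lemma matrix_diff_rdistrib: "((X::'a::ring_1^'n^'m) - Y) ** Z = X ** Z - Y ** Z"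
  by (simp add: vec_eq_iff matrix_matrix_mult_def left_diff_distrib sum_subtractf)

lemma matrix_diff_ldistrib: "(X::'a::ring_1^'n^'m) ** (Y - Z) = X ** Y - X ** Z"
  by (simp add: vec_eq_iff matrix_matrix_mult_def right_diff_distrib sum_subtractf)

lemma matrix_vector_mult_uminus_left: "(- A) *v x = - (A *v (x::'a::ring_1^'n))"
  by (simp add: vec_eq_iff matrix_vector_mult_def sum_negf)

lemma matrix_vector_mult_uminus_right: "A *v (- x) = - (A *v (x::'a::ring_1^'n))"
  by (simp add: vec_eq_iff matrix_vector_mult_def sum_negf)

lemma matrix_inv_injective:
  fixes M :: "'a::field^'n^'n"
  assumes "\<forall>x. M *v x = 0 \<longrightarrow> x = 0"
  shows "M ** matrix_inv M = mat 1" and "matrix_inv M ** M = mat 1"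
proof -
  have "invertible M"
    using assms by (simp add: invertible_left_inverse matrix_left_invertible_ker)
  then have "\<exists>M'. M ** M' = mat 1 \<and> M' ** M = mat 1"
    by (simp add: invertible_def)
  then have "M ** matrix_inv M = mat 1 \<and> matrix_inv M ** M = mat 1"
    unfolding matrix_inv_def by (rule someI_ex)
  then show "M ** matrix_inv M = mat 1" and "matrix_inv M ** M = mat 1"
    by auto
qed

lemma mat_matrix_vector_mult: "mat c *v x = c *s (x::'a::comm_semiring_1^'n)"
  by (simp add: vec_eq_iff matrix_vector_mult_def mat_def if_distrib if_distribR cong: if_cong)

lemma psd_quadratic_form_zero_imp_kernel:
  fixes H :: "real^'n^'n"
  assumes sym: "transpose H = H" and psd: "\<And>x. 0 \<le> x \<bullet> (H *v x)"
    and zero: "v \<bullet> (H *v v) = 0"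
  shows "H *v v = 0"
proof -
  define y where "y = H *v v"
  define a where "a = y \<bullet> y"
  define b where "b = y \<bullet> (H *v y)"
  have "v \<bullet> (H *v y) = (v v* H) \<bullet> y"
    by (simp add: dot_lmul_matrix)
  also have "v v* H = y"
    using vector_transpose_matrix[of v H] sym by (simp add: y_def)
  finally have vHy: "v \<bullet> (H *v y) = a"
    by (simp add: a_def)
  have expand: "(v + t *\<^sub>R y) \<bullet> (H *v (v + t *\<^sub>R y)) = 2 * t * a + t\<^sup>2 * b" for t
  proof -
    have "(v + t *\<^sub>R y) \<bullet> (H *v (v + t *\<^sub>R y)) =
        v \<bullet> (H *v v) + t * (v \<bullet> (H *v y)) + t * (y \<bullet> (H *v v)) + t * t * (y \<bullet> (H *v y))"
      by (simp add: matrix_vector_right_distrib matrix_vector_mult_scaleR inner_add_left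
          inner_add_right algebra_simps)
    then show ?thesis
      using zero vHy by (simp add: y_def[symmetric] a_def b_def power2_eq_square)
  qed
  have "a = 0"
  proof (rule ccontr)
    assume "a \<noteq> 0"
    then have a: "0 < a"
      by (simp add: a_def order_le_neq_trans)
    have b: "0 \<le> b"
      using psd by (simp add: b_def)
    define t where "t = - a / (b + 1)"
    have tb: "t * (b + 1) = - a"
      using b by (simp add: t_def)
    have "t\<^sup>2 * b \<le> t\<^sup>2 * (b + 1)"
      by (simp add: mult_left_mono)
    also have "\<dots> = t * (t * (b + 1))"
      by (simp add: power2_eq_square)
    also have "\<dots> = - t * a"
      using tb by simp
    finally have "2 * t * a + t\<^sup>2 * b \<le> t * a"
      by (simp add: algebra_simps)
    also have "t * a < 0"
      using a b by (simp add: t_def mult_neg_pos divide_neg_pos)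
    finally show False
      using psd[of "v + t *\<^sub>R y"] expand by simp
  qed
  then show ?thesis
    by (simp add: a_def y_def)
qed

lemma symmetric_matrix_rayleigh_min:
  fixes H :: "real^'n^'n"
  assumes sym: "transpose H = H"
  obtains m v where "v \<noteq> 0" and "H *v v = m *\<^sub>R v" and "\<And>x. m * (x \<bullet> x) \<le> x \<bullet> (H *v x)"
proof -
  define q where "q x = x \<bullet> (H *v x)" for x
  have "\<exists>v\<in>sphere (0::real^'n) 1. \<forall>y\<in>sphere 0 1. q v \<le> q y"
  proof (rule continuous_attains_inf)
    show "continuous_on (sphere 0 1) q"
      unfolding q_def by (intro continuous_intros matrix_vector_mult_linear_continuous_on)
  qed (simp_all add: sphere_eq_empty)
  then obtain v where v: "norm v = 1" and min: "\<And>y. norm y = 1 \<Longrightarrow> q v \<le> q y"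
    by auto
  define m where "m = q v"
  have q_ge: "m * (x \<bullet> x) \<le> q x" for x
  proof (cases "x = 0")
    case False
    then have "m \<le> q (x /\<^sub>R norm x)"
      unfolding m_def by (intro min) simp
    also have "\<dots> = q x / (norm x)\<^sup>2"
      by (simp add: q_def matrix_vector_mult_scaleR power2_eq_square divide_inverse
          inverse_mult_distrib mult_ac)
    finally show ?thesis
      using False by (simp add: field_simps power2_norm_eq_inner)
  qed (simp add: q_def)
  have "(H - mat m) *v v = 0"
  proof (rule psd_quadratic_form_zero_imp_kernel)
    show "transpose (H - mat m) = H - mat m"
      using sym by (simp add: transpose_def mat_def vec_eq_iff)
    show "0 \<le> x \<bullet> ((H - mat m) *v x)" for x
      using q_ge[of x] by (simp add: q_def matrix_vector_mult_diff_rdistrib mat_matrix_vector_mult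
          scalar_mult_eq_scaleR inner_diff_right)
    show "v \<bullet> ((H - mat m) *v v) = 0"
      using v by (simp add: m_def q_def matrix_vector_mult_diff_rdistrib mat_matrix_vector_mult
          scalar_mult_eq_scaleR inner_diff_right flip: power2_norm_eq_inner)
  qed
  then have "H *v v = m *\<^sub>R v"
    by (simp add: matrix_vector_mult_diff_rdistrib mat_matrix_vector_mult scalar_mult_eq_scaleR)
  moreover have "v \<noteq> 0"
    using v by auto
  ultimately show ?thesis
    using that q_ge unfolding q_def by blast
qed

lemma symmetric_quadratic_form_le_top_eigenvalue:
  fixes G :: "real^'n^'n"
  assumes sym: "transpose G = G"
    and top: "\<forall>v \<nu>. v \<noteq> 0 \<longrightarrow> G *v v = \<nu> *\<^sub>R v \<longrightarrow> \<nu> \<le> \<nu>0"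
  shows "x \<bullet> (G *v x) \<le> \<nu>0 * (x \<bullet> x)"
proof -
  have "transpose (- G) = - G"
    using sym by (simp add: transpose_def vec_eq_iff)
  then obtain m v where "v \<noteq> 0" and v: "- G *v v = m *\<^sub>R v"
    and m: "\<And>x. m * (x \<bullet> x) \<le> x \<bullet> (- G *v x)"
    using symmetric_matrix_rayleigh_min by blast
  moreover have "G *v v = (- m) *\<^sub>R v"
    using v by (metis matrix_vector_mult_uminus_left minus_equation_iff scaleR_minus_left)
  ultimately have "- m \<le> \<nu>0"
    using top by blast
  then have "- m * (x \<bullet> x) \<le> \<nu>0 * (x \<bullet> x)"
    by (intro mult_right_mono) simp_all
  with m[of x] show ?thesis
    by (simp add: matrix_vector_mult_uminus_left)
qed

lemma positive_symmetric_top_eigenvector_nonzero: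
  fixes G :: "real^'n^'n"
  assumes sym: "transpose G = G" and pos: "\<And>i j. 0 < G$i$j"
    and top: "\<forall>v \<nu>. v \<noteq> 0 \<longrightarrow> G *v v = \<nu> *\<^sub>R v \<longrightarrow> \<nu> \<le> \<nu>0"
    and "w \<noteq> 0" and w: "G *v w = \<nu>0 *\<^sub>R w"
  shows "w$i \<noteq> 0"
proof -
  define aw where "aw = (\<chi> i. \<bar>w$i\<bar>)"
  define H where "H = mat \<nu>0 - G"
  have H: "H *v x = \<nu>0 *\<^sub>R x - G *v x" for x
    by (simp add: H_def matrix_vector_mult_diff_rdistrib mat_matrix_vector_mult scalar_mult_eq_scaleR)
  have H_sym: "transpose H = H"
    using sym by (simp add: H_def transpose_def mat_def vec_eq_iff)
  have H_psd: "0 \<le> x \<bullet> (H *v x)" for x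
    using symmetric_quadratic_form_le_top_eigenvalue[OF sym top, of x] by (simp add: H inner_diff_right)
  have "w \<bullet> (G *v w) \<le> aw \<bullet> (G *v aw)"
    unfolding aw_def inner_vec_def matrix_vector_mult_def
  proof (simp add: sum_distrib_left, intro sum_mono)
    fix i j
    have "w$i * (G$i$j * w$j) \<le> \<bar>w$i * (G$i$j * w$j)\<bar>"
      by simp
    also have "\<dots> = \<bar>w$i\<bar> * (G$i$j * \<bar>w$j\<bar>)"
      using pos by (simp add: abs_mult less_imp_le)
    finally show "w$i * (G$i$j * w$j) \<le> \<bar>w$i\<bar> * (G$i$j * \<bar>w$j\<bar>)" .
  qed
  moreover have "w \<bullet> (G *v w) = \<nu>0 * (aw \<bullet> aw)"
    by (simp add: w aw_def inner_vec_def sum_distrib_left mult_ac)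
  ultimately have "aw \<bullet> (H *v aw) = 0"
    using H_psd[of aw] by (simp add: H inner_diff_right)
  then have "H *v aw = 0"
    using psd_quadratic_form_zero_imp_kernel[OF H_sym H_psd] by blast
  then have G_aw: "G *v aw = \<nu>0 *\<^sub>R aw"
    by (simp add: H)
  obtain j where "w$j \<noteq> 0"
    using \<open>w \<noteq> 0\<close> by (auto simp: vec_eq_iff)
  then have "0 < (\<Sum>k\<in>UNIV. G$i$k * aw$k)"
    using pos by (intro sum_pos2[of _ j]) (auto simp: aw_def less_imp_le)
  also have "\<dots> = \<nu>0 * aw$i"
    using G_aw by (simp add: vec_eq_iff matrix_vector_mult_def)
  finally show ?thesis
    by (auto simp: aw_def)
qed

lemma positive_symmetric_top_eigenspace_dim_one:
  fixes G :: "real^'n^'n"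
  assumes sym: "transpose G = G" and pos: "\<And>i j. 0 < G$i$j"
    and top: "\<forall>v \<nu>. v \<noteq> 0 \<longrightarrow> G *v v = \<nu> *\<^sub>R v \<longrightarrow> \<nu> \<le> \<nu>0"
    and "w \<noteq> 0" and w: "G *v w = \<nu>0 *\<^sub>R w" and u: "G *v u = \<nu>0 *\<^sub>R u"
  shows "u = (u$i / w$i) *\<^sub>R w"
proof -
  have "w$i \<noteq> 0"
    using positive_symmetric_top_eigenvector_nonzero[OF sym pos top \<open>w \<noteq> 0\<close> w] .
  define z where "z = u - (u$i / w$i) *\<^sub>R w"
  have "G *v z = \<nu>0 *\<^sub>R z"
    by (simp add: z_def matrix_vector_mult_diff_distrib matrix_vector_mult_scaleR u w algebra_simps)
  moreover have "z$i = 0"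
    using \<open>w$i \<noteq> 0\<close> by (simp add: z_def)
  ultimately have "z = 0"
    using positive_symmetric_top_eigenvector_nonzero[OF sym pos top] by blast
  then show ?thesis
    by (simp add: z_def)
qed

lemma real_matrix_eigenvector_Re_Im:
  fixes N :: "complex^'n^'n" and G :: "real^'n^'n"
  assumes NG: "\<And>i j. N$i$j = of_real (G$i$j)" and x: "N *v x = of_real \<nu> *s x"
  shows "G *v (\<chi> i. Re (x$i)) = \<nu> *\<^sub>R (\<chi> i. Re (x$i))"
    and "G *v (\<chi> i. Im (x$i)) = \<nu> *\<^sub>R (\<chi> i. Im (x$i))"
proof -
  have "(\<Sum>j\<in>UNIV. of_real (G$i$j) * x$j) = of_real \<nu> * x$i" for i
    using x NG by (simp add: vec_eq_iff matrix_vector_mult_def)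
  then have "Re (\<Sum>j\<in>UNIV. of_real (G$i$j) * x$j) = \<nu> * Re (x$i)"
    and "Im (\<Sum>j\<in>UNIV. of_real (G$i$j) * x$j) = \<nu> * Im (x$i)" for i
    by simp_all
  then have "(\<Sum>j\<in>UNIV. G$i$j * Re (x$j)) = \<nu> * Re (x$i)"
    and "(\<Sum>j\<in>UNIV. G$i$j * Im (x$j)) = \<nu> * Im (x$i)" for i
    by (simp_all add: Re_sum Im_sum)
  then show "G *v (\<chi> i. Re (x$i)) = \<nu> *\<^sub>R (\<chi> i. Re (x$i))"
    and "G *v (\<chi> i. Im (x$i)) = \<nu> *\<^sub>R (\<chi> i. Im (x$i))"
    by (auto simp: vec_eq_iff matrix_vector_mult_def)
qed

lemma real_matrix_eigenvector_of_real:
  fixes N :: "complex^'n^'n" and G :: "real^'n^'n"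
  assumes NG: "\<And>i j. N$i$j = of_real (G$i$j)" and v: "G *v v = \<nu> *\<^sub>R v"
  shows "N *v (\<chi> i. of_real (v$i)) = of_real \<nu> *s (\<chi> i. of_real (v$i))"
proof -
  have "(\<Sum>j\<in>UNIV. G$i$j * v$j) = \<nu> * v$i" for i
    using v by (simp add: vec_eq_iff matrix_vector_mult_def)
  then show ?thesis
    by (simp add: vec_eq_iff matrix_vector_mult_def NG flip: of_real_mult of_real_sum)
qed

lemma complex_vec_eq_smult_of_real:
  assumes "(\<chi> k. Re (x$k)) = a *\<^sub>R w" and "(\<chi> k. Im (x$k)) = b *\<^sub>R w"
  shows "x = Complex a b *s (\<chi> k. complex_of_real (w$k))"
proof -
  have "x$k = Complex a b * of_real (w$k)" for k
    using arg_cong[OF assms(1), of "\<lambda>v. v$k"] arg_cong[OF assms(2), of "\<lambda>v. v$k"]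
    by (simp add: complex_eq_iff)
  then show ?thesis
    by (simp add: vec_eq_iff)
qed

lemma hermitian_positive_top_eigenspace_dim_one:
  fixes N :: "complex^'n^'n"
  assumes herm: "cmat_adj N = N" and pos: "\<And>i j. N$i$j \<in> \<real> \<and> 0 < Re (N$i$j)"
    and top: "\<forall>x \<nu>. x \<noteq> 0 \<longrightarrow> N *v x = of_real \<nu> *s x \<longrightarrow> \<nu> \<le> \<nu>0"
    and "c0 \<noteq> 0" and c0: "N *v c0 = of_real \<nu>0 *s c0" and c: "N *v c = of_real \<nu>0 *s c"
  shows "\<exists>\<alpha>. c = \<alpha> *s c0"
proof -
  define G where "G = (\<chi> i j. Re (N$i$j))"
  have NG: "N$i$j = of_real (G$i$j)" for i j
    using pos by (simp add: G_def of_real_Re)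
  have G_pos: "0 < G$i$j" for i j
    using pos by (simp add: G_def)
  have "Re (N$i$j) = Re (N$j$i)" for i j
  proof -
    have "cmat_adj N $ i $ j = cnj (N$j$i)"
      by (simp add: cmat_adj_def)
    then show ?thesis
      using herm by simp
  qed
  then have G_sym: "transpose G = G"
    by (simp add: G_def transpose_def vec_eq_iff)
  have G_top: "\<forall>v \<nu>. v \<noteq> 0 \<longrightarrow> G *v v = \<nu> *\<^sub>R v \<longrightarrow> \<nu> \<le> \<nu>0"
  proof (intro allI impI)
    fix v \<nu>
    assume "v \<noteq> 0" and "G *v v = \<nu> *\<^sub>R v"
    then have "(\<chi> i. of_real (v$i)) \<noteq> (0::complex^'n)"
      and "N *v (\<chi> i. of_real (v$i)) = of_real \<nu> *s (\<chi> i. of_real (v$i))"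
      using real_matrix_eigenvector_of_real[OF NG] by (auto simp: vec_eq_iff)
    then show "\<nu> \<le> \<nu>0"
      using top by blast
  qed
  let ?Re = "\<lambda>x::complex^'n. \<chi> i. Re (x$i)" and ?Im = "\<lambda>x::complex^'n. \<chi> i. Im (x$i)"
  define w where "w = (if ?Re c0 \<noteq> 0 then ?Re c0 else ?Im c0)"
  have "w \<noteq> 0"
    using \<open>c0 \<noteq> 0\<close> by (auto simp: w_def vec_eq_iff complex_eq_iff)
  note Re_Im = real_matrix_eigenvector_Re_Im[OF NG]
  have "G *v w = \<nu>0 *\<^sub>R w"
    using Re_Im[OF c0] by (simp add: w_def)
  note multiple = positive_symmetric_top_eigenspace_dim_one[OF G_sym G_pos G_top \<open>w \<noteq> 0\<close> this]
  obtain i where "w$i \<noteq> 0"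
    using \<open>w \<noteq> 0\<close> by (auto simp: vec_eq_iff)
  define wc where "wc = (\<chi> i. complex_of_real (w$i))"
  have "\<exists>\<alpha>. x = \<alpha> *s wc" if "N *v x = of_real \<nu>0 *s x" for x
    using multiple[OF Re_Im(1)[OF that]] multiple[OF Re_Im(2)[OF that]]
    unfolding wc_def by (blast intro: complex_vec_eq_smult_of_real)
  from this[OF c0] this[OF c] obtain a a0 where "c = a *s wc" and "c0 = a0 *s wc"
    by blast
  then have "c = (a / a0) *s c0"
    using \<open>c0 \<noteq> 0\<close> by (auto simp: vector_smult_assoc)
  then show ?thesis ..
qed

lemma smatrix_imaginary_axis:
  fixes A B :: "complex^'n^'n" and \<kappa> :: real
  defines "M \<equiv> A - cmat_scale (of_real \<kappa>) B"
  assumes inj: "\<forall>x. M *v x = 0 \<longrightarrow> x = 0"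
  shows "mat 1 + smatrix A B (\<i> * of_real \<kappa>) = cmat_scale (- 2 * of_real \<kappa>) (matrix_inv M ** B)"
proof -
  have "A + cmat_scale (\<i> * (\<i> * of_real \<kappa>)) B = M"
    and "A - cmat_scale (\<i> * (\<i> * of_real \<kappa>)) B = M + cmat_scale (2 * of_real \<kappa>) B"
    by (simp_all add: M_def cmat_scale_def vec_eq_iff)
  then have "smatrix A B (\<i> * of_real \<kappa>) = - (matrix_inv M ** (M + cmat_scale (2 * of_real \<kappa>) B))"
    by (simp add: smatrix_def)
  also have "\<dots> = - (mat 1 + cmat_scale (2 * of_real \<kappa>) (matrix_inv M ** B))"
    by (simp add: matrix_add_ldistrib cmat_scale_mult_right matrix_inv_injective[OF inj])
  finally show ?thesis
    by (simp add: cmat_scale_def vec_eq_iff)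
qed

lemma matrix_vector_mult_diff_scale_eq_0_iff:
  "(A - cmat_scale (of_real \<kappa>) B) *v x = 0 \<longleftrightarrow> A *v x = of_real \<kappa> *s (B *v x)"
  by (simp add: matrix_vector_mult_diff_rdistrib cmat_scale_matrix_vector_mult)

lemma smatrix_imaginary_axis_hermitian:
  fixes A B :: "complex^'n^'n"
  assumes herm: "A ** cmat_adj B = B ** cmat_adj A"
    and inj: "\<forall>x. A *v x = of_real \<kappa> *s (B *v x) \<longrightarrow> x = 0"
  shows "cmat_adj (mat 1 + smatrix A B (\<i> * of_real \<kappa>)) = mat 1 + smatrix A B (\<i> * of_real \<kappa>)"
proof -
  define M where "M = A - cmat_scale (of_real \<kappa>) B"
  define Mi where "Mi = matrix_inv M"
  have M_inj: "\<forall>x. M *v x = 0 \<longrightarrow> x = 0"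
    using inj by (simp add: M_def matrix_vector_mult_diff_scale_eq_0_iff)
  have Mi: "M ** Mi = mat 1" "Mi ** M = mat 1"
    using matrix_inv_injective[OF M_inj] by (simp_all add: Mi_def)
  have M_herm: "M ** cmat_adj B = B ** cmat_adj M"
    using herm by (simp add: M_def cmat_adj_diff cmat_adj_scale_of_real matrix_diff_rdistrib
        matrix_diff_ldistrib cmat_scale_mult_left cmat_scale_mult_right)
  have "cmat_adj (Mi ** B) = (Mi ** M) ** (cmat_adj B ** cmat_adj Mi)"
    by (simp add: cmat_adj_mult Mi(2))
  also have "\<dots> = Mi ** ((M ** cmat_adj B) ** cmat_adj Mi)"
    by (simp add: matrix_mul_assoc)
  also have "\<dots> = Mi ** (B ** (cmat_adj M ** cmat_adj Mi))"
    by (simp add: M_herm matrix_mul_assoc)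
  also have "cmat_adj M ** cmat_adj Mi = mat 1"
    by (simp add: Mi(2) cmat_adj_mat_1 flip: cmat_adj_mult)
  finally have "cmat_adj (Mi ** B) = Mi ** B"
    by simp
  then show ?thesis
    using smatrix_imaginary_axis[OF M_inj[unfolded M_def]]
    by (simp add: Mi_def M_def cmat_adj_scale_of_real[of "- 2 * \<kappa>", simplified])
qed

lemma smatrix_imaginary_axis_eigenvector_iff:
  fixes A B :: "complex^'n^'n"
  assumes inj: "\<forall>x. A *v x = of_real \<kappa> *s (B *v x) \<longrightarrow> x = 0" and "\<nu> \<noteq> 0"
  shows "(mat 1 + smatrix A B (\<i> * of_real \<kappa>)) *v x = of_real \<nu> *s x
    \<longleftrightarrow> A *v x = of_real (\<kappa> - 2 * \<kappa> / \<nu>) *s (B *v x)"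
proof -
  define M where "M = A - cmat_scale (of_real \<kappa>) B"
  define Mi where "Mi = matrix_inv M"
  have M_inj: "\<forall>x. M *v x = 0 \<longrightarrow> x = 0"
    using inj by (simp add: M_def matrix_vector_mult_diff_scale_eq_0_iff)
  have Mi: "M *v (Mi *v y) = y" "Mi *v (M *v y) = y" for y
    using matrix_inv_injective[OF M_inj] by (simp_all add: Mi_def matrix_vector_mul_assoc)
  have "(mat 1 + smatrix A B (\<i> * of_real \<kappa>)) *v x = of_real \<nu> *s x
      \<longleftrightarrow> (- 2 * of_real \<kappa>) *s (Mi *v (B *v x)) = of_real \<nu> *s x"
    using smatrix_imaginary_axis[OF M_inj[unfolded M_def]]
    by (simp add: Mi_def M_def cmat_scale_matrix_vector_mult matrix_vector_mul_assoc)
  also have "\<dots> \<longleftrightarrow> (- 2 * of_real \<kappa>) *s (B *v x) = of_real \<nu> *s (M *v x)"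
    by (metis Mi vector_scalar_commute)
  also have "\<dots> \<longleftrightarrow> A *v x = of_real (\<kappa> - 2 * \<kappa> / \<nu>) *s (B *v x)"
    using \<open>\<nu> \<noteq> 0\<close>
    by (auto simp: M_def matrix_vector_mult_diff_rdistrib cmat_scale_matrix_vector_mult vec_eq_iff
        field_simps)
  finally show ?thesis .
qed

lemma strictly_positive_kernel_one_dimensional:
  fixes A B :: "complex^'e::finite^'e"
  assumes herm: "A ** cmat_adj B = B ** cmat_adj A" and sp: "strictly_positive A B"
    and top: "\<forall>t c. k < t \<longrightarrow> A *v c = of_real t *s (B *v c) \<longrightarrow> c = 0"
    and "c0 \<noteq> 0" and c0: "A *v c0 = of_real k *s (B *v c0)" and c: "A *v c = of_real k *s (B *v c)"
  shows "\<exists>\<alpha>. c = \<alpha> *s c0"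
proof -
  obtain \<kappa>0 where pos: "\<forall>\<kappa>\<ge>\<kappa>0. \<forall>i j.
      (mat 1 + smatrix A B (\<i> * of_real \<kappa>)) $ i $ j \<in> \<real> \<and>
      0 < Re ((mat 1 + smatrix A B (\<i> * of_real \<kappa>)) $ i $ j)"
    using sp unfolding strictly_positive_def by blast
  define \<kappa> where "\<kappa> = max \<kappa>0 (max k 0 + 1)"
  have "\<kappa>0 \<le> \<kappa>" and "k < \<kappa>" and "0 < \<kappa>"
    by (auto simp: \<kappa>_def)
  define N where "N = mat 1 + smatrix A B (\<i> * of_real \<kappa>)"
  have inj: "\<forall>x. A *v x = of_real \<kappa> *s (B *v x) \<longrightarrow> x = 0"
    using top \<open>k < \<kappa>\<close> by blast
  define \<nu>0 where "\<nu>0 = 2 * \<kappa> / (\<kappa> - k)"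
  have "0 < \<nu>0"
    using \<open>k < \<kappa>\<close> \<open>0 < \<kappa>\<close> by (simp add: \<nu>0_def)
  have "\<kappa> - 2 * \<kappa> / \<nu>0 = k"
    using \<open>k < \<kappa>\<close> \<open>0 < \<kappa>\<close> by (simp add: \<nu>0_def)
  then have eigen_iff: "N *v x = of_real \<nu>0 *s x \<longleftrightarrow> A *v x = of_real k *s (B *v x)" for x
    using smatrix_imaginary_axis_eigenvector_iff[OF inj, of \<nu>0] \<open>0 < \<nu>0\<close> by (simp add: N_def)
  have N_top: "\<forall>x \<nu>. x \<noteq> 0 \<longrightarrow> N *v x = of_real \<nu> *s x \<longrightarrow> \<nu> \<le> \<nu>0"
  proof (intro allI impI)
    fix x \<nu>
    assume "x \<noteq> 0" and x: "N *v x = of_real \<nu> *s x"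
    show "\<nu> \<le> \<nu>0"
    proof (cases "0 < \<nu>")
      case True
      then have "A *v x = of_real (\<kappa> - 2 * \<kappa> / \<nu>) *s (B *v x)"
        using x smatrix_imaginary_axis_eigenvector_iff[OF inj, of \<nu>] by (simp add: N_def)
      then have "\<kappa> - 2 * \<kappa> / \<nu> \<le> k"
        using top \<open>x \<noteq> 0\<close> by (meson not_le)
      then show ?thesis
        using True \<open>k < \<kappa>\<close> by (simp add: \<nu>0_def field_simps)
    qed (use \<open>0 < \<nu>0\<close> in simp)
  qed
  show ?thesis
  proof (rule hermitian_positive_top_eigenspace_dim_one[OF _ _ N_top \<open>c0 \<noteq> 0\<close>])
    show "cmat_adj N = N"
      unfolding N_def by (rule smatrix_imaginary_axis_hermitian[OF herm inj])
    show "N$i$j \<in> \<real> \<and> 0 < Re (N$i$j)" for i j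
      using pos \<open>\<kappa>0 \<le> \<kappa>\<close> by (simp add: N_def)
  qed (use c0 c eigen_iff in auto)
qed

lemma has_vector_derivative_exp_of_real:
  "((\<lambda>y. complex_of_real (exp (c * y))) has_vector_derivative of_real c * of_real (exp (c * x)))
    (at x within S)"
proof -
  have "((\<lambda>y. exp (c * y)) has_real_derivative c * exp (c * x)) (at x within S)"
    by (auto intro!: derivative_eq_intros)
  from has_vector_derivative_of_real[OF this] show ?thesis
    by simp
qed

lemma has_vector_derivative_zero_imp_eq:
  assumes "a \<le> b" and "\<And>w. w \<in> {a..b} \<Longrightarrow> (g has_vector_derivative 0) (at w within {a..b})"
  shows "g b = g a"
proof -
  obtain c where "\<And>w. w \<in> {a..b} \<Longrightarrow> g w = c"
    by (rule has_vector_derivative_zero_constant[of "{a..b}" g]) (use assms in auto)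
  then show ?thesis
    using \<open>a \<le> b\<close> by simp
qed

lemma square_integrable_not_eventually_ge:
  fixes f :: "real \<Rightarrow> 'a::real_normed_vector"
  assumes L2: "(\<lambda>x. (norm (f x))\<^sup>2) integrable_on {0..}"
    and "0 < \<delta>" and low: "\<And>x. X \<le> x \<Longrightarrow> \<delta> \<le> norm (f x)"
  shows False
proof -
  define g where "g = (\<lambda>x. (norm (f x))\<^sup>2)"
  define I where "I = integral {0..} g"
  define Y where "Y = max X 0"
  define n where "n = I / \<delta>\<^sup>2 + 1"
  have "0 \<le> I"
    unfolding I_def g_def using L2 by (intro integral_nonneg) auto
  then have "0 < n"
    by (simp add: n_def add_nonneg_pos)
  have int: "g integrable_on {Y..Y + n}"
    by (rule integrable_on_subinterval[OF L2[folded g_def]]) (auto simp: Y_def)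
  have "n * \<delta>\<^sup>2 = integral {Y..Y + n} (\<lambda>x. \<delta>\<^sup>2)"
    using \<open>0 < n\<close> by simp
  also have "\<dots> \<le> integral {Y..Y + n} g"
  proof (rule integral_le)
    show "\<delta>\<^sup>2 \<le> g x" if "x \<in> {Y..Y + n}" for x
      using low[of x] that \<open>0 < \<delta>\<close> by (simp add: g_def Y_def power_mono)
  qed (use int in auto)
  also have "\<dots> \<le> I"
    unfolding I_def using int L2[folded g_def] by (intro integral_subset_le) (auto simp: g_def Y_def)
  finally show False
    using \<open>0 < \<delta>\<close> by (simp add: n_def field_simps)
qed

lemma continuous_on_indefinite_integral_eq:
  fixes f g :: "real \<Rightarrow> 'a::banach"
  assumes "g integrable_on {a..b}" and "\<And>x. x \<in> {a..b} \<Longrightarrow> f x = c + integral {a..x} g"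
  shows "continuous_on {a..b} f"
proof -
  have "continuous_on {a..b} (\<lambda>x. c + integral {a..x} g)"
    by (rule continuous_on_add[OF continuous_on_const indefinite_integral_continuous_1[OF assms(1)]])
  then show ?thesis
    by (rule continuous_on_cong[THEN iffD1, rotated 2]) (use assms(2) in auto)
qed

lemma has_vector_derivative_indefinite_integral_eq:
  fixes f g :: "real \<Rightarrow> 'a::banach"
  assumes "continuous_on {a..b} g" and "\<And>x. x \<in> {a..b} \<Longrightarrow> f x = c + integral {a..x} g"
    and "u \<in> {a..b}"
  shows "(f has_vector_derivative g u) (at u within {a..b})"
proof -
  have "((\<lambda>x. c + integral {a..x} g) has_vector_derivative g u) (at u within {a..b})"
    using has_vector_derivative_add[OF has_vector_derivative_const
        integral_has_vector_derivative[OF assms(1,3)]] by (simp only: add_0_left)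
  then show ?thesis
    by (rule has_vector_derivative_transform[OF assms(3), rotated]) (use assms(2) in auto)
qed

lemma H2_half_eq_0_neg: "H2_half f f1 f2 \<Longrightarrow> x < 0 \<Longrightarrow> f x = 0"
  unfolding H2_half_def by blast

lemma H2_half_square_integrable: "H2_half f f1 f2 \<Longrightarrow> (\<lambda>x. (cmod (f x))\<^sup>2) integrable_on {0..}"
  unfolding H2_half_def by blast

lemma H2_half_eigenfunction_derivatives:
  assumes H: "H2_half f f1 f2"
    and ae: "AE x in lebesgue. 0 \<le> x \<longrightarrow> - f2 x = of_real lam * f x"
    and u: "u \<in> {0..b}"
  shows "(f has_vector_derivative f1 u) (at u within {0..b})"
    and "(f1 has_vector_derivative - of_real lam * f u) (at u within {0..b})"
proof -
  obtain N where "N \<in> null_sets lebesgue"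
    and N: "\<And>x. x \<in> space lebesgue - N \<Longrightarrow> 0 \<le> x \<longrightarrow> - f2 x = of_real lam * f x"
    using AE_E3[OF ae] by blast
  then have "negligible N"
    by (simp add: negligible_iff_null_sets)
  have f2_eq: "f2 x = - of_real lam * f x" if "x \<notin> N" and "0 \<le> x" for x
  proof -
    have "- f2 x = of_real lam * f x"
      using N[of x] that by simp
    then show ?thesis
      by (metis minus_minus mult_minus_left)
  qed
  have f_int: "f x = f 0 + integral {0..x} f1" and f1_int: "f1 x = f1 0 + integral {0..x} f2"
    if "x \<in> {0..b}" for x
    using H that unfolding H2_half_def atLeastAtMost_iff by blast+
  have "0 \<le> b"
    using u by simp
  then have "f2 absolutely_integrable_on {0..b}"
    using H unfolding H2_half_def by blast
  then have "f2 integrable_on {0..b}"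
    by (rule set_lebesgue_integral_eq_integral(1))
  then have f1_cont: "continuous_on {0..b} f1"
    using f1_int by (rule continuous_on_indefinite_integral_eq)
  then show "(f has_vector_derivative f1 u) (at u within {0..b})"
    using f_int u by (rule has_vector_derivative_indefinite_integral_eq)
  have "continuous_on {0..b} f"
    using integrable_continuous_interval[OF f1_cont] f_int by (rule continuous_on_indefinite_integral_eq)
  then have "continuous_on {0..b} (\<lambda>y. - of_real lam * f y)"
    by (rule continuous_on_mult[OF continuous_on_const])
  moreover have "f1 x = f1 0 + integral {0..x} (\<lambda>y. - of_real lam * f y)" if "x \<in> {0..b}" for x
  proof -
    have "integral {0..x} f2 = integral {0..x} (\<lambda>y. - of_real lam * f y)"
      by (rule integral_spike[OF \<open>negligible N\<close>]) (auto simp: f2_eq)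
    then show ?thesis
      using f1_int[OF that] by simp
  qed
  ultimately show "(f1 has_vector_derivative - of_real lam * f u) (at u within {0..b})"
    using u by (rule has_vector_derivative_indefinite_integral_eq)
qed

lemma ode_first_integral:
  fixes f f1 :: "real \<Rightarrow> complex"
  assumes f': "\<And>u b. u \<in> {0..b} \<Longrightarrow> (f has_vector_derivative f1 u) (at u within {0..b})"
    and f1': "\<And>u b. u \<in> {0..b} \<Longrightarrow> (f1 has_vector_derivative of_real s ^ 2 * f u) (at u within {0..b})"
    and "0 \<le> u"
  shows "f1 u + of_real s * f u = (f1 0 + of_real s * f 0) * of_real (exp (s * u))"
proof -
  have "((\<lambda>v. (f1 v + of_real s * f v) * of_real (exp (- s * v))) has_vector_derivative 0)
      (at w within {0..u})" if "w \<in> {0..u}" for w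
  proof -
    have "((\<lambda>v. f1 v + of_real s * f v) has_vector_derivative of_real s ^ 2 * f w + of_real s * f1 w)
        (at w within {0..u})"
      using f' f1' that by (intro has_vector_derivative_add has_vector_derivative_mult_right) auto
    from has_vector_derivative_mult[OF this has_vector_derivative_exp_of_real[of "- s" w]]
    show ?thesis
      by (simp add: algebra_simps power2_eq_square)
  qed
  from has_vector_derivative_zero_imp_eq[OF \<open>0 \<le> u\<close> this]
  have const: "(f1 u + of_real s * f u) * of_real (exp (- s * u)) = f1 0 + of_real s * f 0"
    by simp
  have "f1 u + of_real s * f u = (f1 u + of_real s * f u) * of_real (exp (- s * u) * exp (s * u))"
    by (simp flip: exp_add)
  also have "\<dots> = (f1 0 + of_real s * f 0) * of_real (exp (s * u))"
    using const by (simp only: of_real_mult mult.assoc[symmetric])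
  finally show ?thesis .
qed

lemma square_integrable_affine_eq_0:
  fixes f :: "real \<Rightarrow> complex"
  assumes L2: "(\<lambda>x. (cmod (f x))\<^sup>2) integrable_on {0..}"
    and f: "\<And>x. 0 \<le> x \<Longrightarrow> f x = a + D * of_real x"
  shows "a = 0" and "D = 0"
proof -
  have "D = 0"
  proof (rule ccontr)
    assume "D \<noteq> 0"
    show False
    proof (rule square_integrable_not_eventually_ge[OF L2 zero_less_one])
      fix y
      assume y: "(cmod a + 1) / cmod D \<le> y"
      have "0 < cmod D"
        using \<open>D \<noteq> 0\<close> by simp
      then have "0 \<le> (cmod a + 1) / cmod D"
        by simp
      with y have "0 \<le> y"
        by linarith
      have "cmod a + 1 \<le> cmod D * y"
        using y \<open>0 < cmod D\<close> by (simp add: field_simps)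
      moreover have "cmod (D * of_real y) - cmod a \<le> cmod (f y)"
        using f[OF \<open>0 \<le> y\<close>] norm_diff_ineq[of "D * of_real y" a] by (simp add: add.commute)
      ultimately show "1 \<le> cmod (f y)"
        using \<open>0 \<le> y\<close> by (simp add: norm_mult)
    qed
  qed
  moreover have "a = 0"
  proof (rule ccontr)
    assume "a \<noteq> 0"
    show False
    proof (rule square_integrable_not_eventually_ge[OF L2, of "cmod a" 0])
      show "cmod a \<le> cmod (f y)" if "0 \<le> y" for y
        using f[OF that] \<open>D = 0\<close> by simp
    qed (use \<open>a \<noteq> 0\<close> in simp)
  qed
  ultimately show "a = 0" and "D = 0"
    by blast+
qed

lemma square_integrable_ode_zero_eq_0:
  fixes f f1 :: "real \<Rightarrow> complex"
  assumes f': "\<And>u b. u \<in> {0..b} \<Longrightarrow> (f has_vector_derivative f1 u) (at u within {0..b})"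
    and f1': "\<And>u b. u \<in> {0..b} \<Longrightarrow> (f1 has_vector_derivative 0) (at u within {0..b})"
    and L2: "(\<lambda>x. (cmod (f x))\<^sup>2) integrable_on {0..}"
    and "0 \<le> x"
  shows "f x = 0"
proof -
  define D where "D = f1 0"
  have f1_const: "f1 u = D" if "0 \<le> u" for u
    using ode_first_integral[of f f1 0 u] f' f1' that by (simp add: D_def)
  have affine: "f u = f 0 + D * of_real u" if "0 \<le> u" for u
  proof -
    have "((\<lambda>v. f v - D * of_real v) has_vector_derivative 0) (at w within {0..u})"
      if "w \<in> {0..u}" for w
    proof -
      have "((\<lambda>v. D * of_real v) has_vector_derivative D) (at w within {0..u})"
        using has_vector_derivative_mult_right[OF has_vector_derivative_of_real[OF DERIV_ident]]
        by simp
      from has_vector_derivative_diff[OF f'[OF that] this] show ?thesis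
        using f1_const that by simp
    qed
    from has_vector_derivative_zero_imp_eq[OF \<open>0 \<le> u\<close> this] show ?thesis
      by (simp add: algebra_simps)
  qed
  have "f 0 = 0" and "D = 0"
    using square_integrable_affine_eq_0[OF L2 affine] by simp_all
  then show ?thesis
    using affine[OF \<open>0 \<le> x\<close>] by simp
qed

lemma square_integrable_exp_combination_growing_coeff_eq_0:
  fixes f :: "real \<Rightarrow> complex"
  assumes "0 < k" and L2: "(\<lambda>x. (cmod (f x))\<^sup>2) integrable_on {0..}"
    and f: "\<And>x. 0 \<le> x \<Longrightarrow> f x = U * of_real (exp (k * x)) + V * of_real (exp (- k * x))"
  shows "U = 0"
proof (rule ccontr)
  assume "U \<noteq> 0"
  show False
  proof (rule square_integrable_not_eventually_ge[OF L2, of "cmod U" "cmod V / (k * cmod U)"])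
    fix x
    assume x: "cmod V / (k * cmod U) \<le> x"
    have "0 < k * cmod U"
      using \<open>0 < k\<close> \<open>U \<noteq> 0\<close> by simp
    then have "0 \<le> cmod V / (k * cmod U)"
      by simp
    with x have "0 \<le> x"
      by linarith
    have "cmod V \<le> k * x * cmod U"
      using x \<open>0 < k * cmod U\<close> by (simp add: field_simps)
    have "cmod U + k * x * cmod U \<le> cmod U * exp (k * x)"
      using mult_left_mono[OF exp_ge_add_one_self[of "k * x"], of "cmod U"] by (simp add: algebra_simps)
    moreover have "cmod V * exp (- k * x) \<le> cmod V"
      using \<open>0 < k\<close> \<open>0 \<le> x\<close> by (simp add: mult_left_le)
    moreover have "cmod U * exp (k * x) - cmod V * exp (- k * x) \<le> cmod (f x)"
      using norm_diff_ineq[of "U * of_real (exp (k * x))" "V * of_real (exp (- k * x))"]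
      by (simp add: f[OF \<open>0 \<le> x\<close>] norm_mult)
    ultimately show "cmod U \<le> cmod (f x)"
      using \<open>cmod V \<le> k * x * cmod U\<close> by linarith
  qed (use \<open>U \<noteq> 0\<close> in simp)
qed

lemma square_integrable_ode_exp_decay:
  fixes f f1 :: "real \<Rightarrow> complex"
  assumes "0 < k"
    and f': "\<And>u b. u \<in> {0..b} \<Longrightarrow> (f has_vector_derivative f1 u) (at u within {0..b})"
    and f1': "\<And>u b. u \<in> {0..b} \<Longrightarrow> (f1 has_vector_derivative of_real k ^ 2 * f u) (at u within {0..b})"
    and L2: "(\<lambda>x. (cmod (f x))\<^sup>2) integrable_on {0..}"
  shows "\<forall>x\<ge>0. f x = f 0 * of_real (exp (- k * x))" and "f1 0 = - of_real k * f 0"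
proof -
  define U where "U = f1 0 + of_real k * f 0"
  define W where "W = f1 0 - of_real k * f 0"
  have U: "f1 u + of_real k * f u = U * of_real (exp (k * u))" if "0 \<le> u" for u
    using ode_first_integral[of f f1 k u] f' f1' that by (simp add: U_def)
  have W: "f1 u - of_real k * f u = W * of_real (exp (- k * u))" if "0 \<le> u" for u
    using ode_first_integral[of f f1 "- k" u] f' f1' that by (simp add: W_def)
  have "f x = U / (2 * of_real k) * of_real (exp (k * x)) + - W / (2 * of_real k) * of_real (exp (- k * x))"
    if "0 \<le> x" for x
  proof -
    have "2 * of_real k * f x = U * of_real (exp (k * x)) - W * of_real (exp (- k * x))"
      using U[OF that] W[OF that] by (simp add: algebra_simps)
    then show ?thesis
      using \<open>0 < k\<close> by (simp add: field_simps)
  qed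
  then have "U / (2 * of_real k) = 0"
    by (rule square_integrable_exp_combination_growing_coeff_eq_0[OF \<open>0 < k\<close> L2])
  then have "U = 0"
    using \<open>0 < k\<close> by simp
  then show f1_0: "f1 0 = - of_real k * f 0"
    by (simp add: U_def eq_neg_iff_add_eq_0)
  show "\<forall>x\<ge>0. f x = f 0 * of_real (exp (- k * x))"
  proof (intro allI impI)
    fix x :: real
    assume "0 \<le> x"
    have "f1 x = - of_real k * f x"
      using U[OF \<open>0 \<le> x\<close>] \<open>U = 0\<close> by (simp add: eq_neg_iff_add_eq_0)
    then have "f1 x - of_real k * f x = - 2 * of_real k * f x"
      by simp
    then have "- 2 * of_real k * f x = W * of_real (exp (- k * x))"
      using W[OF \<open>0 \<le> x\<close>] by metis
    also have "W = - 2 * of_real k * f 0"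
      using f1_0 by (simp add: W_def)
    finally have "- 2 * of_real k * f x = - 2 * of_real k * (f 0 * of_real (exp (- k * x)))"
      by (simp only: mult.assoc)
    then show "f x = f 0 * of_real (exp (- k * x))"
      using \<open>0 < k\<close> by simp
  qed
qed

definition decaying_exponential :: "real \<Rightarrow> complex^'e \<Rightarrow> 'e \<Rightarrow> real \<Rightarrow> complex" where
  "decaying_exponential k c = (\<lambda>e x. if 0 \<le> x then c$e * of_real (exp (- k * x)) else 0)"

lemma decaying_exponential_eq_0_iff: "decaying_exponential k c = (\<lambda>e x. 0) \<longleftrightarrow> c = 0"
proof
  assume "decaying_exponential k c = (\<lambda>e x. 0)"
  then have "decaying_exponential k c e 0 = 0" for e
    by simp
  then show "c = 0"
    by (simp add: decaying_exponential_def vec_eq_iff)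
qed (simp add: decaying_exponential_def fun_eq_iff)

lemma gscale_decaying_exponential:
  "gscale \<alpha> (decaying_exponential k c) = decaying_exponential k (\<alpha> *s c)"
  by (simp add: gscale_def decaying_exponential_def fun_eq_iff)

lemma exp_decay_square_integrable:
  assumes "0 < k"
  shows "(\<lambda>x. (cmod (a * of_real (exp (- k * x))))\<^sup>2) integrable_on {0..}"
proof -
  have "(\<lambda>x. exp (- (2 * k) * x)) integrable_on {0..}"
    using integrable_on_exp_minus_to_infinity[of "2 * k" 0] assms by simp
  from integrable_cmul[OF this, of "(cmod a)\<^sup>2"]
  have "(\<lambda>x. (cmod a)\<^sup>2 * exp (- (2 * k) * x)) integrable_on {0..}"
    by simp
  moreover have "(cmod (a * of_real (exp (- k * x))))\<^sup>2 = (cmod a)\<^sup>2 * exp (- (2 * k) * x)" for x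
    by (simp add: norm_mult power_mult_distrib power2_eq_square flip: exp_add)
  ultimately show ?thesis
    by simp
qed

lemma H2_half_decaying_exponential:
  assumes "0 < k"
  shows "H2_half (decaying_exponential k c e)
    (\<lambda>x. - of_real k * c$e * of_real (exp (- k * x)))
    (\<lambda>x. of_real k ^ 2 * c$e * of_real (exp (- k * x)))"
  unfolding H2_half_def
proof (intro conjI allI impI)
  let ?f1 = "\<lambda>x. - of_real k * c$e * of_real (exp (- k * x))"
  let ?f2 = "\<lambda>x. of_real k ^ 2 * c$e * of_real (exp (- k * x))"
  have f': "((\<lambda>x. c$e * of_real (exp (- k * x))) has_vector_derivative ?f1 x) (at x within S)"
    and f1': "(?f1 has_vector_derivative ?f2 x) (at x within S)" for x S
    by (rule has_vector_derivative_eq_rhs[OF has_vector_derivative_mult_right[OF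
          has_vector_derivative_exp_of_real]], simp add: power2_eq_square)+
  fix x :: real
  show "decaying_exponential k c e x = 0" if "x < 0"
    using that by (simp add: decaying_exponential_def)
  show "?f2 absolutely_integrable_on {0..x}"
    by (intro absolutely_integrable_continuous_real continuous_intros)
  assume "0 \<le> x"
  show "?f1 x = ?f1 0 + integral {0..x} ?f2"
    using integral_unique[OF fundamental_theorem_of_calculus[OF \<open>0 \<le> x\<close> f1']] by simp
  show "decaying_exponential k c e x =
      decaying_exponential k c e 0 + integral {0..x} ?f1"
    using integral_unique[OF fundamental_theorem_of_calculus[OF \<open>0 \<le> x\<close> f']] \<open>0 \<le> x\<close>
    by (simp add: decaying_exponential_def)
next
  show "(\<lambda>x. (cmod (decaying_exponential k c e x))\<^sup>2) integrable_on {0..}"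
    using exp_decay_square_integrable[OF assms, of "c$e"]
    by (rule integrable_eq) (simp add: decaying_exponential_def)
  show "(\<lambda>x. (cmod (of_real k ^ 2 * c$e * of_real (exp (- k * x))))\<^sup>2) integrable_on {0..}"
    using exp_decay_square_integrable[OF assms, of "of_real k ^ 2 * c$e"] by simp
qed

lemma H2_half_eigenfunction_zero:
  assumes H: "H2_half f f1 f2" and ae: "AE x in lebesgue. 0 \<le> x \<longrightarrow> - f2 x = of_real 0 * f x"
  shows "f x = 0"
proof (cases "0 \<le> x")
  case True
  show ?thesis
  proof (rule square_integrable_ode_zero_eq_0[of f f1])
    show "(f has_vector_derivative f1 u) (at u within {0..b})" if "u \<in> {0..b}" for u b
      using H2_half_eigenfunction_derivatives(1)[OF H ae that] .
    show "(f1 has_vector_derivative 0) (at u within {0..b})" if "u \<in> {0..b}" for u b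
      using H2_half_eigenfunction_derivatives(2)[OF H ae that] by simp
  qed (use H2_half_square_integrable[OF H] True in auto)
next
  case False
  then show ?thesis
    by (intro H2_half_eq_0_neg[OF H]) simp
qed

lemma H2_half_eigenfunction_neg_square:
  assumes "0 < k" and H: "H2_half f f1 f2"
    and ae: "AE x in lebesgue. 0 \<le> x \<longrightarrow> - f2 x = of_real (- k\<^sup>2) * f x"
  shows "f x = (if 0 \<le> x then f 0 * of_real (exp (- k * x)) else 0)"
    and "f1 0 = - of_real k * f 0"
proof -
  have "(f has_vector_derivative f1 u) (at u within {0..b})"
    and "(f1 has_vector_derivative of_real k ^ 2 * f u) (at u within {0..b})"
    if "u \<in> {0..b}" for u b
    using H2_half_eigenfunction_derivatives[OF H ae that] by simp_all
  note decay = square_integrable_ode_exp_decay[OF \<open>0 < k\<close> this H2_half_square_integrable[OF H]]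
  show "f1 0 = - of_real k * f 0"
    by (rule decay(2))
  show "f x = (if 0 \<le> x then f 0 * of_real (exp (- k * x)) else 0)"
  proof (cases "0 \<le> x")
    case True
    then have "f x = f 0 * of_real (exp (- k * x))"
      using decay(1) by blast
    with True show ?thesis
      by simp
  qed (simp add: H2_half_eq_0_neg[OF H])
qed

lemma not_is_eigenvalue_negLap_zero:
  fixes A B :: "complex^'e^'e"
  shows "\<not> is_eigenvalue_negLap A B 0"
proof
  assume "is_eigenvalue_negLap A B 0"
  then obtain \<psi> :: "'e \<Rightarrow> real \<Rightarrow> complex" and d1 d2 where "\<psi> \<noteq> (\<lambda>e x. 0)"
    and H: "\<forall>e. H2_half (\<psi> e) (d1 e) (d2 e)"
    and ae: "\<forall>e. AE x in lebesgue. 0 \<le> x \<longrightarrow> - d2 e x = of_real 0 * \<psi> e x"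
    unfolding is_eigenvalue_negLap_def eigenspace_negLap_def mem_Collect_eq by blast
  have "\<psi> e x = 0" for e x
    by (rule H2_half_eigenfunction_zero[OF H[rule_format] ae[rule_format]])
  with \<open>\<psi> \<noteq> (\<lambda>e x. 0)\<close> show False
    by auto
qed

lemma decaying_exponential_mem_eigenspace_negLap:
  assumes "0 < k" and c: "A *v c = of_real k *s (B *v c)"
  shows "decaying_exponential k c \<in> eigenspace_negLap A B (- k\<^sup>2)"
proof -
  let ?\<psi> = "decaying_exponential k c"
  let ?d1 = "\<lambda>e x. - of_real k * c$e * of_real (exp (- k * x))"
  let ?d2 = "\<lambda>e x. of_real k ^ 2 * c$e * of_real (exp (- k * x))"
  have "(\<chi> e. ?d1 e 0) = (- of_real k) *s c"
    by (simp add: vec_eq_iff)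
  then have "A *v (\<chi> e. ?\<psi> e 0) + B *v (\<chi> e. ?d1 e 0) = 0"
    using c by (simp add: decaying_exponential_def vector_scalar_commute matrix_vector_mult_uminus_right)
  moreover have "\<forall>e. AE x in lebesgue. 0 \<le> x \<longrightarrow> - ?d2 e x = of_real (- k\<^sup>2) * ?\<psi> e x"
    by (simp add: decaying_exponential_def)
  moreover have "\<forall>e. H2_half (?\<psi> e) (?d1 e) (?d2 e)"
    using H2_half_decaying_exponential[OF \<open>0 < k\<close>] by blast
  ultimately show ?thesis
    unfolding eigenspace_negLap_def mem_Collect_eq by (intro exI[of _ ?d1] exI[of _ ?d2]) blast
qed

lemma eigenspace_negLap_neg_square:
  fixes A B :: "complex^'e::finite^'e"
  assumes "0 < k"
  shows "eigenspace_negLap A B (- k\<^sup>2) = decaying_exponential k ` {c. A *v c = of_real k *s (B *v c)}"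
proof (intro set_eqI iffI)
  fix \<psi>
  assume "\<psi> \<in> eigenspace_negLap A B (- k\<^sup>2)"
  then obtain d1 d2 where H: "\<forall>e. H2_half (\<psi> e) (d1 e) (d2 e)"
    and bc: "A *v (\<chi> e. \<psi> e 0) + B *v (\<chi> e. d1 e 0) = 0"
    and ae: "\<forall>e. AE x in lebesgue. 0 \<le> x \<longrightarrow> - d2 e x = of_real (- k\<^sup>2) * \<psi> e x"
    unfolding eigenspace_negLap_def by blast
  note edge = H2_half_eigenfunction_neg_square[OF \<open>0 < k\<close> H[rule_format] ae[rule_format]]
  define c where "c = (\<chi> e. \<psi> e 0)"
  have "\<psi> = decaying_exponential k c"
    by (intro ext, subst edge(1)) (simp add: decaying_exponential_def c_def)
  moreover have "(\<chi> e. d1 e 0) = (- of_real k) *s c"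
    by (simp add: vec_eq_iff c_def edge(2))
  then have "A *v c + (- of_real k) *s (B *v c) = 0"
    using bc by (simp only: c_def vector_scalar_commute)
  then have "A *v c = of_real k *s (B *v c)"
    by (simp add: vector_smult_lneg eq_neg_iff_add_eq_0[symmetric])
  ultimately show "\<psi> \<in> decaying_exponential k ` {c. A *v c = of_real k *s (B *v c)}"
    by blast
qed (auto intro: decaying_exponential_mem_eigenspace_negLap[OF \<open>0 < k\<close>])

lemma is_eigenvalue_negLap_neg_square_iff:
  fixes A B :: "complex^'e::finite^'e"
  assumes "0 < k"
  shows "is_eigenvalue_negLap A B (- k\<^sup>2) \<longleftrightarrow> (\<exists>c. c \<noteq> 0 \<and> A *v c = of_real k *s (B *v c))"
  using decaying_exponential_eq_0_iff[of k]
  by (auto simp: is_eigenvalue_negLap_def eigenspace_negLap_neg_square[OF assms])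

lemma injective_shift_above_bottom_eigenvalue:
  fixes A B :: "complex^'e::finite^'e"
  assumes "0 < k" and bottom: "\<forall>\<mu>. is_eigenvalue_negLap A B \<mu> \<longrightarrow> - k\<^sup>2 \<le> \<mu>"
    and "k < t" and "A *v c = of_real t *s (B *v c)"
  shows "c = 0"
proof (rule ccontr)
  assume "c \<noteq> 0"
  then have "is_eigenvalue_negLap A B (- t\<^sup>2)"
    using is_eigenvalue_negLap_neg_square_iff[of t] assms by auto
  then have "- k\<^sup>2 \<le> - t\<^sup>2"
    using bottom by blast
  moreover have "k\<^sup>2 < t\<^sup>2"
    using \<open>0 < k\<close> \<open>k < t\<close> by (simp add: power_strict_mono)
  ultimately show False
    by simp
qed

interpretation graph_function: vector_space gscale
  by unfold_locales (auto simp: gscale_def fun_eq_iff algebra_simps)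

lemma cdim_eq_1:
  assumes "\<psi>0 \<in> S" and "\<psi>0 \<noteq> (\<lambda>e x. 0)" and "\<And>\<psi>. \<psi> \<in> S \<Longrightarrow> \<exists>\<alpha>. \<psi> = gscale \<alpha> \<psi>0"
  shows "cdim S = 1"
  unfolding cdim_def
proof (rule graph_function.dim_unique[of "{\<psi>0}"])
  show "S \<subseteq> graph_function.span {\<psi>0}"
    using assms(3) by (auto simp: graph_function.span_singleton)
  show "graph_function.independent {\<psi>0}"
    using assms(2) by (simp add: graph_function.independent_insert zero_fun_def)
qed (use assms(1) in auto)

theorem proposition6p4:
  fixes A B :: "complex^'e::finite^'e" and lam :: real
  assumes "max_isotropic_data A B"
    and "strictly_positive A B"
    and "is_eigenvalue_negLap A B lam"
    and "lam \<le> 0"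
    and "\<forall>\<mu>. is_eigenvalue_negLap A B \<mu> \<longrightarrow> lam \<le> \<mu>"
  shows "cdim (eigenspace_negLap A B lam) = 1"
proof -
  have herm: "A ** cmat_adj B = B ** cmat_adj A"
    using assms(1) unfolding max_isotropic_data_def by (metis cmat_adj_mult cmat_adj_cmat_adj)
  define k where "k = sqrt (- lam)"
  have lam: "lam = - k\<^sup>2"
    using assms(4) by (simp add: k_def)
  have "lam \<noteq> 0"
    using assms(3) not_is_eigenvalue_negLap_zero by blast
  then have "0 < k"
    using assms(4) by (simp add: k_def)
  define K where "K = {c. A *v c = of_real k *s (B *v c)}"
  have eig: "eigenspace_negLap A B lam = decaying_exponential k ` K"
    using eigenspace_negLap_neg_square[OF \<open>0 < k\<close>] by (simp add: lam K_def)
  have top: "\<forall>t c. k < t \<longrightarrow> A *v c = of_real t *s (B *v c) \<longrightarrow> c = 0"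
    using injective_shift_above_bottom_eigenvalue[OF \<open>0 < k\<close>] assms(5) unfolding lam by blast
  obtain c0 where "c0 \<noteq> 0" and "c0 \<in> K"
    using assms(3) is_eigenvalue_negLap_neg_square_iff[OF \<open>0 < k\<close>] by (auto simp: lam K_def)
  show ?thesis
  proof (rule cdim_eq_1)
    show "decaying_exponential k c0 \<in> eigenspace_negLap A B lam"
      and "decaying_exponential k c0 \<noteq> (\<lambda>e x. 0)"
      using \<open>c0 \<in> K\<close> \<open>c0 \<noteq> 0\<close> by (simp_all add: eig decaying_exponential_eq_0_iff)
    show "\<exists>\<alpha>. \<psi> = gscale \<alpha> (decaying_exponential k c0)" if "\<psi> \<in> eigenspace_negLap A B lam" for \<psi>
      using that \<open>c0 \<noteq> 0\<close> \<open>c0 \<in> K\<close> strictly_positive_kernel_one_dimensional[OF herm assms(2) top]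
      by (auto simp: eig K_def gscale_decaying_exponential)
  qed
qed

end
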